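(* There exist absolute constants $\varepsilon_0>0$ and $n_0$ such that for the population protocol USD with $n\ge n_0$ and every $t\ge1$: if $\beta_{t-1}\ge\frac12-\varepsilon_0$ and $\gamma_{t-1}\le\varepsilon_0$, then $$\mathbb E_{t-1}[\widetilde\gamma_t]\ge\widetilde\gamma_{t-1}+\frac{1}{12n^2}.$$
   Context: Vertex set $V$, $|V|=n$; opinions in $\Sigma=[k]\cup\{\bot\}$ ($\bot$ = undecided). USD update rule: $\mathsf{update}(\sigma_1,\sigma_2)=\bot$ if $\sigma_1,\sigma_2\in[k]$ and $\sigma_1\ne\sigma_2$; $=\sigma_2$ if $\sigma_1=\bot$; $=\sigma_1$ otherwise. Population protocol USD: given $\mathrm{opn}_t\in\Sigma^V$, an ordered pair $(u,v)$ is chosen uniformly from $V\times V$ (with replacement), $\mathrm{opn}_{t+1}(u)=\mathsf{update}(\mathrm{opn}_t(u),\mathrm{opn}_t(v))$, and all other vertices keep their opinions. Notation: $\alpha_t(i)=|\{u:\mathrm{opn}_t(u)=i\}|/n$, $\beta_t=\sum_{i\in[k]}\alpha_t(i)$, $\gamma_t=\sum_{i\in[k]}\alpha_t(i)^2$, $\widetilde\gamma_t=\gamma_t/\beta_t^2$ if $\beta_t>0$ and $\widetilde\gamma_t=0$ if $\beta_t=0$. $\mathbb E_{t-1}$ is conditional expectation given the natural filtration $\mathcal F_{t-1}$. *)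

theory Defs
  imports "HOL-Probability.Probability"
begin

text \<open>Opinions: None = undecided, Some i = opinion i (i in {1..k}).
  Vertex set V = {..<n}. A configuration is a map opn :: nat => nat option
  (only its values on V matter).\<close>

definition usd_update :: "nat option \<Rightarrow> nat option \<Rightarrow> nat option" where
  "usd_update s1 s2 =
     (case (s1, s2) of
        (Some a, Some b) \<Rightarrow> (if a \<noteq> b then None else Some a)
      | (None, _) \<Rightarrow> s2
      | (Some a, None) \<Rightarrow> Some a)"

definition usd_step :: "(nat \<Rightarrow> nat option) \<Rightarrow> nat \<times> nat \<Rightarrow> (nat \<Rightarrow> nat option)" where
  "usd_step opn uv = opn(fst uv := usd_update (opn (fst uv)) (opn (snd uv)))"

definition valid_config :: "nat \<Rightarrow> nat \<Rightarrow> (nat \<Rightarrow> nat option) \<Rightarrow> bool" where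
  "valid_config n k opn \<longleftrightarrow> (\<forall>u<n. opn u = None \<or> (\<exists>i\<in>{1..k}. opn u = Some i))"

definition usd_alpha :: "nat \<Rightarrow> (nat \<Rightarrow> nat option) \<Rightarrow> nat \<Rightarrow> real" where
  "usd_alpha n opn i = real (card {u\<in>{..<n}. opn u = Some i}) / real n"

definition usd_beta :: "nat \<Rightarrow> nat \<Rightarrow> (nat \<Rightarrow> nat option) \<Rightarrow> real" where
  "usd_beta n k opn = (\<Sum>i\<in>{1..k}. usd_alpha n opn i)"

definition usd_gamma :: "nat \<Rightarrow> nat \<Rightarrow> (nat \<Rightarrow> nat option) \<Rightarrow> real" where
  "usd_gamma n k opn = (\<Sum>i\<in>{1..k}. (usd_alpha n opn i)\<^sup>2)"

definition usd_gamma_tilde :: "nat \<Rightarrow> nat \<Rightarrow> (nat \<Rightarrow> nat option) \<Rightarrow> real" where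
  "usd_gamma_tilde n k opn =
     (if usd_beta n k opn > 0 then usd_gamma n k opn / (usd_beta n k opn)\<^sup>2 else 0)"

definition usd_next :: "nat \<Rightarrow> (nat \<Rightarrow> nat option) \<Rightarrow> (nat \<Rightarrow> nat option) pmf" where
  "usd_next n opn = map_pmf (usd_step opn) (pmf_of_set ({..<n} \<times> {..<n}))"

end

theory Submission
  imports Defs
begin

(* In terms of the opinion counts c_i, with B = sum c_i, S = sum c_i^2 and T = sum c_i^3,
   gamma-tilde is the collision probability S / B^2. One interaction changes the counts only
   if an undecided vertex adopts opinion j (c_j increases, N c_j of the n^2 pairs) or a vertex
   of opinion i meets another opinion (c_i decreases, c_i (B - c_i) pairs). Summing the exact
   changes, the adoptions contribute N (B^2 - S) / (B (B + 1)^2) >= 0 and the clashes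
   ((B^2 - S)^2 + 2 B (B T - S^2)) / (B^2 (B - 1)^2); by Cauchy-Schwarz S^2 <= B T, and
   S <= B^2 / 2 when gamma is small compared to beta^2, so the clashes contribute at least 1/4.
   Hence the expected gain of gamma-tilde is at least 1 / (4 n^2). *)

lemma sum_comp_fun_upd:
  fixes g :: "'b \<Rightarrow> 'c::ab_group_add"
  assumes "finite K" "j \<in> K"
  shows "(\<Sum>i\<in>K. g ((f(j := y)) i)) = (\<Sum>i\<in>K. g (f i)) - g (f j) + g y"
proof -
  have "(\<Sum>i\<in>K - {j}. g ((f(j := y)) i)) = (\<Sum>i\<in>K - {j}. g (f i))"
    by (rule sum.cong) auto
  then show ?thesis
    using sum.remove[OF assms, of "\<lambda>i. g ((f(j := y)) i)"] sum.remove[OF assms, of "\<lambda>i. g (f i)"]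
    by simp
qed

lemma sum_cubic_poly:
  fixes c :: "'a \<Rightarrow> real"
  shows "(\<Sum>i\<in>K. a * c i + b * (c i)\<^sup>2 + d * (c i) ^ 3)
    = a * sum c K + b * (\<Sum>i\<in>K. (c i)\<^sup>2) + d * (\<Sum>i\<in>K. (c i) ^ 3)"
  by (simp add: sum.distrib sum_distrib_left)

lemma power2_sum_squares_le_sum_mult_sum_cubes:
  fixes c :: "'a \<Rightarrow> real"
  assumes "\<And>i. i \<in> K \<Longrightarrow> c i \<ge> 0"
  shows "(\<Sum>i\<in>K. (c i)\<^sup>2)\<^sup>2 \<le> sum c K * (\<Sum>i\<in>K. (c i) ^ 3)"
proof -
  have "0 \<le> (\<Sum>i\<in>K. \<Sum>j\<in>K. c i * c j * (c i - c j)\<^sup>2)"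
    using assms by (intro sum_nonneg) auto
  also have "\<dots> = (\<Sum>i\<in>K. \<Sum>j\<in>K. (c i) ^ 3 * c j + c i * (c j) ^ 3 - 2 * ((c i)\<^sup>2 * (c j)\<^sup>2))"
    by (intro sum.cong refl) (simp add: power2_eq_square power3_eq_cube algebra_simps)
  also have "\<dots> = (\<Sum>i\<in>K. \<Sum>j\<in>K. (c i) ^ 3 * c j) + (\<Sum>i\<in>K. \<Sum>j\<in>K. c i * (c j) ^ 3)
      - 2 * (\<Sum>i\<in>K. \<Sum>j\<in>K. (c i)\<^sup>2 * (c j)\<^sup>2)"
    by (simp only: sum.distrib sum_subtractf sum_distrib_left)
  also have "\<dots> = 2 * (sum c K * (\<Sum>i\<in>K. (c i) ^ 3) - (\<Sum>i\<in>K. (c i)\<^sup>2)\<^sup>2)"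
    by (simp only: sum_product[symmetric] power2_eq_square[of "sum _ _"]) (simp add: algebra_simps)
  finally show ?thesis by simp
qed

definition collision_prob :: "'a set \<Rightarrow> ('a \<Rightarrow> real) \<Rightarrow> real" where
  "collision_prob K c = (if sum c K > 0 then (\<Sum>i\<in>K. (c i)\<^sup>2) / (sum c K)\<^sup>2 else 0)"

lemma collision_prob_fun_upd:
  assumes "finite K" "j \<in> K" "sum c K + d > 0"
  shows "collision_prob K (c(j := c j + d))
    = ((\<Sum>i\<in>K. (c i)\<^sup>2) + 2 * d * c j + d\<^sup>2) / (sum c K + d)\<^sup>2"
proof -
  have "sum (c(j := c j + d)) K = sum c K + d"
    using sum_comp_fun_upd[OF assms(1,2), where g="\<lambda>x. x" and f=c and y="c j + d"] by simp
  moreover have "(\<Sum>i\<in>K. ((c(j := c j + d)) i)\<^sup>2) = (\<Sum>i\<in>K. (c i)\<^sup>2) + 2 * d * c j + d\<^sup>2"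
    using sum_comp_fun_upd[OF assms(1,2), where g=power2 and f=c and y="c j + d"]
    by (simp add: power2_eq_square algebra_simps)
  ultimately show ?thesis
    using assms(3) by (simp add: collision_prob_def)
qed

definition adoption_gain :: "'a set \<Rightarrow> ('a \<Rightarrow> real) \<Rightarrow> real" where
  "adoption_gain K c =
     (\<Sum>j\<in>K. c j * (collision_prob K (c(j := c j + 1)) - collision_prob K c))"

definition clash_gain :: "'a set \<Rightarrow> ('a \<Rightarrow> real) \<Rightarrow> real" where
  "clash_gain K c =
     (\<Sum>i\<in>K. c i * (sum c K - c i) * (collision_prob K (c(i := c i - 1)) - collision_prob K c))"

lemma adoption_gain_eq:
  fixes c :: "'a \<Rightarrow> real" and K :: "'a set"
  defines "B \<equiv> sum c K" and "S \<equiv> \<Sum>i\<in>K. (c i)\<^sup>2"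
  assumes "finite K" "B > 0"
  shows "adoption_gain K c = (B\<^sup>2 - S) / (B * (B + 1)\<^sup>2)"
proof -
  have "adoption_gain K c
      = (\<Sum>j\<in>K. ((S + 1) / (B + 1)\<^sup>2 - S / B\<^sup>2) * c j + 2 / (B + 1)\<^sup>2 * (c j)\<^sup>2 + 0 * (c j) ^ 3)"
    unfolding adoption_gain_def
  proof (intro sum.cong refl)
    fix j assume "j \<in> K"
    then have "collision_prob K (c(j := c j + 1)) = (S + 2 * c j + 1) / (B + 1)\<^sup>2"
      using collision_prob_fun_upd[of K j c 1] assms by (simp add: B_def S_def)
    moreover have "collision_prob K c = S / B\<^sup>2"
      using assms by (simp add: collision_prob_def B_def S_def)
    ultimately show "c j * (collision_prob K (c(j := c j + 1)) - collision_prob K c)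
      = ((S + 1) / (B + 1)\<^sup>2 - S / B\<^sup>2) * c j + 2 / (B + 1)\<^sup>2 * (c j)\<^sup>2 + 0 * (c j) ^ 3"
      by (simp add: algebra_simps add_divide_distrib power2_eq_square)
  qed
  also have "\<dots> = (B\<^sup>2 - S) / (B * (B + 1)\<^sup>2)"
    using assms(4) unfolding sum_cubic_poly B_def[symmetric] S_def[symmetric]
    by (simp add: field_simps add_pos_pos) algebra
  finally show ?thesis .
qed

lemma clash_gain_eq:
  fixes c :: "'a \<Rightarrow> real" and K :: "'a set"
  defines "B \<equiv> sum c K" and "S \<equiv> \<Sum>i\<in>K. (c i)\<^sup>2" and "T \<equiv> \<Sum>i\<in>K. (c i) ^ 3"
  assumes "finite K" "B > 1"
  shows "clash_gain K c = ((B\<^sup>2 - S)\<^sup>2 + 2 * B * (B * T - S\<^sup>2)) / (B\<^sup>2 * (B - 1)\<^sup>2)"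
proof -
  define q where "q = 1 / (B - 1)\<^sup>2"
  define r where "r = S / B\<^sup>2"
  have "clash_gain K c = (\<Sum>i\<in>K. ((S + 1) * q - r) * B * c i
      + (r - (S + 1) * q - 2 * q * B) * (c i)\<^sup>2 + 2 * q * (c i) ^ 3)"
    unfolding clash_gain_def B_def[symmetric]
  proof (intro sum.cong refl)
    fix i assume "i \<in> K"
    then have minus: "collision_prob K (c(i := c i - 1)) = (S - 2 * c i + 1) * q"
      using collision_prob_fun_upd[of K i c "-1"] assms by (simp add: B_def S_def q_def)
    have plain: "collision_prob K c = r"
      using assms by (simp add: collision_prob_def B_def S_def r_def)
    show "c i * (B - c i) * (collision_prob K (c(i := c i - 1)) - collision_prob K c)
      = ((S + 1) * q - r) * B * c i + (r - (S + 1) * q - 2 * q * B) * (c i)\<^sup>2 + 2 * q * (c i) ^ 3"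
      unfolding minus plain by (simp add: algebra_simps power2_eq_square power3_eq_cube)
  qed
  also have "\<dots> = q * ((S + 1) * (B\<^sup>2 - S) - 2 * B * S + 2 * T) - r * (B\<^sup>2 - S)"
    unfolding sum_cubic_poly B_def[symmetric] S_def[symmetric] T_def[symmetric]
    by (simp add: power2_eq_square algebra_simps)
  also have "\<dots> = (B\<^sup>2 * ((S + 1) * (B\<^sup>2 - S) - 2 * B * S + 2 * T) - S * (B\<^sup>2 - S) * (B - 1)\<^sup>2)
      / (B\<^sup>2 * (B - 1)\<^sup>2)"
    using assms(5) by (simp add: q_def r_def field_simps)
  also have "B\<^sup>2 * ((S + 1) * (B\<^sup>2 - S) - 2 * B * S + 2 * T) - S * (B\<^sup>2 - S) * (B - 1)\<^sup>2
      = (B\<^sup>2 - S)\<^sup>2 + 2 * B * (B * T - S\<^sup>2)"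
    by (simp add: power2_eq_square algebra_simps)
  finally show ?thesis .
qed

lemma clash_gain_ge:
  fixes c :: "'a \<Rightarrow> real"
  assumes "finite K" "\<And>i. i \<in> K \<Longrightarrow> c i \<ge> 0" "sum c K \<ge> 2"
    and "2 * (\<Sum>i\<in>K. (c i)\<^sup>2) \<le> (sum c K)\<^sup>2"
  shows "clash_gain K c \<ge> 1 / 4"
proof -
  define B where "B = sum c K"
  define S where "S = (\<Sum>i\<in>K. (c i)\<^sup>2)"
  define T where "T = (\<Sum>i\<in>K. (c i) ^ 3)"
  have B: "B \<ge> 2" "2 * S \<le> B\<^sup>2"
    using assms(3,4) by (simp_all add: B_def S_def)
  have "S\<^sup>2 \<le> B * T"
    unfolding B_def S_def T_def by (rule power2_sum_squares_le_sum_mult_sum_cubes) (use assms(2) in auto)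
  then have "0 \<le> 2 * B * (B * T - S\<^sup>2)"
    using B by simp
  moreover have "(B\<^sup>2 / 2)\<^sup>2 \<le> (B\<^sup>2 - S)\<^sup>2"
    using B by (intro power_mono) auto
  ultimately have Y: "(B\<^sup>2 / 2)\<^sup>2 \<le> (B\<^sup>2 - S)\<^sup>2 + 2 * B * (B * T - S\<^sup>2)"
    by linarith
  moreover have "0 \<le> (B\<^sup>2 - S)\<^sup>2 + 2 * B * (B * T - S\<^sup>2)"
    using order_trans[OF zero_le_power2 Y] .
  moreover have "B\<^sup>2 * (B - 1)\<^sup>2 \<le> B\<^sup>2 * B\<^sup>2"
    using B by (intro mult_left_mono power_mono) auto
  ultimately have "(B\<^sup>2 / 2)\<^sup>2 / (B\<^sup>2 * B\<^sup>2) \<le> ((B\<^sup>2 - S)\<^sup>2 + 2 * B * (B * T - S\<^sup>2)) / (B\<^sup>2 * (B - 1)\<^sup>2)"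
    using B by (intro frac_le) auto
  moreover have "(B\<^sup>2 / 2)\<^sup>2 / (B\<^sup>2 * B\<^sup>2) = 1 / 4"
    using B by (simp add: power2_eq_square)
  ultimately show ?thesis
    using clash_gain_eq[OF assms(1)] B by (simp add: B_def S_def T_def)
qed

definition opinion_count :: "nat \<Rightarrow> (nat \<Rightarrow> nat option) \<Rightarrow> nat \<Rightarrow> real" where
  "opinion_count n opn i = real (card {u\<in>{..<n}. opn u = Some i})"

lemma usd_beta_eq: "usd_beta n k opn = sum (opinion_count n opn) {1..k} / n"
  by (simp add: usd_beta_def usd_alpha_def opinion_count_def sum_divide_distrib)

lemma usd_gamma_eq: "usd_gamma n k opn = (\<Sum>i\<in>{1..k}. (opinion_count n opn i)\<^sup>2) / (real n)\<^sup>2"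
  by (simp add: usd_gamma_def usd_alpha_def opinion_count_def sum_divide_distrib power_divide)

lemma usd_gamma_tilde_eq_collision_prob:
  "usd_gamma_tilde n k opn = collision_prob {1..k} (opinion_count n opn)"
proof (cases "n = 0")
  case True
  then show ?thesis
    by (simp add: usd_gamma_tilde_def usd_beta_def usd_alpha_def collision_prob_def opinion_count_def)
next
  case False
  then show ?thesis
    by (simp add: usd_gamma_tilde_def collision_prob_def usd_beta_eq usd_gamma_eq
        zero_less_divide_iff power_divide)
qed

lemma opinion_count_fun_upd:
  assumes "u < n"
  shows "opinion_count n (opn(u := x)) i
    = opinion_count n opn i - of_bool (opn u = Some i) + of_bool (x = Some i)"
proof -
  define A where "A = {w\<in>{..<n}. w \<noteq> u \<and> opn w = Some i}"
  have A: "finite A" "u \<notin> A" by (auto simp: A_def)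
  have "{w\<in>{..<n}. (opn(u := x)) w = Some i} = (if x = Some i then insert u A else A)"
    "{w\<in>{..<n}. opn w = Some i} = (if opn u = Some i then insert u A else A)"
    using assms by (auto simp: A_def)
  then show ?thesis unfolding opinion_count_def using A by auto
qed

definition usd_count_update :: "('a \<Rightarrow> real) \<Rightarrow> 'a option \<Rightarrow> 'a option \<Rightarrow> 'a \<Rightarrow> real" where
  "usd_count_update c a b =
     (case (a, b) of
        (None, Some j) \<Rightarrow> c(j := c j + 1)
      | (Some i, Some j) \<Rightarrow> if i = j then c else c(i := c i - 1)
      | _ \<Rightarrow> c)"

lemma opinion_count_usd_step:
  assumes "u < n"
  shows "opinion_count n (usd_step opn (u, v))
    = usd_count_update (opinion_count n opn) (opn u) (opn v)"
  by (rule ext) (auto simp: usd_step_def opinion_count_fun_upd[OF assms] usd_count_update_def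
      usd_update_def split: option.split)

lemma sum_over_opinions:
  fixes \<phi> :: "nat option \<Rightarrow> real"
  assumes "valid_config n k opn"
  shows "(\<Sum>u<n. \<phi> (opn u)) = real (card {u\<in>{..<n}. opn u = None}) * \<phi> None
           + (\<Sum>i\<in>{1..k}. opinion_count n opn i * \<phi> (Some i))"
proof -
  have "opn ` {..<n} \<subseteq> insert None (Some ` {1..k})"
    using assms by (auto simp: valid_config_def)
  then have "(\<Sum>u<n. \<phi> (opn u)) = (\<Sum>a\<in>insert None (Some ` {1..k}). \<Sum>u\<in>{u\<in>{..<n}. opn u = a}. \<phi> (opn u))"
    by (intro sum.group[symmetric]) auto
  also have "\<dots> = (\<Sum>a\<in>insert None (Some ` {1..k}). real (card {u\<in>{..<n}. opn u = a}) * \<phi> a)"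
    by (rule sum.cong) auto
  also have "\<dots> = real (card {u\<in>{..<n}. opn u = None}) * \<phi> None
      + (\<Sum>i\<in>{1..k}. opinion_count n opn i * \<phi> (Some i))"
    by (simp add: sum.reindex opinion_count_def)
  finally show ?thesis .
qed

lemma sum_usd_collision_prob_change:
  assumes "valid_config n k opn"
  defines "c \<equiv> opinion_count n opn" and "K \<equiv> {1..k}"
  shows "(\<Sum>u<n. \<Sum>v<n. collision_prob K (usd_count_update c (opn u) (opn v)) - collision_prob K c)
    = real (card {u\<in>{..<n}. opn u = None}) * adoption_gain K c + clash_gain K c"
proof -
  define N where "N = real (card {u\<in>{..<n}. opn u = None})"
  define \<delta> where "\<delta> a b = collision_prob K (usd_count_update c a b) - collision_prob K c" for a b
  have no_change: "\<delta> a None = 0" for a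
    by (cases a) (simp_all add: \<delta>_def usd_count_update_def)
  define F where "F a = (\<Sum>j\<in>K. c j * \<delta> a (Some j))" for a
  have "(\<Sum>v<n. \<delta> a (opn v)) = F a" for a
    using sum_over_opinions[OF assms(1), of "\<delta> a"] by (simp add: no_change F_def c_def K_def)
  then have "(\<Sum>u<n. \<Sum>v<n. \<delta> (opn u) (opn v)) = N * F None + (\<Sum>i\<in>K. c i * F (Some i))"
    using sum_over_opinions[OF assms(1), of F] by (simp add: N_def c_def K_def)
  moreover have "F None = adoption_gain K c"
    by (simp add: F_def adoption_gain_def \<delta>_def usd_count_update_def)
  moreover have "F (Some i) = (sum c K - c i) * (collision_prob K (c(i := c i - 1)) - collision_prob K c)"
    if "i \<in> K" for i
  proof -
    define D where "D = collision_prob K (c(i := c i - 1)) - collision_prob K c"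
    have "F (Some i) = (\<Sum>j\<in>K. c j * D - (if j = i then c j * D else 0))"
      by (auto simp: F_def \<delta>_def D_def usd_count_update_def intro!: sum.cong)
    also have "\<dots> = (sum c K - c i) * D"
      using that by (simp add: sum_subtractf sum_distrib_left K_def algebra_simps)
    finally show ?thesis unfolding D_def .
  qed
  then have "(\<Sum>i\<in>K. c i * F (Some i)) = clash_gain K c"
    by (simp add: clash_gain_def mult.assoc)
  ultimately show ?thesis
    by (simp add: \<delta>_def N_def)
qed

lemma expectation_usd_next:
  assumes "n > 0"
  shows "measure_pmf.expectation (usd_next n opn) f
    = (\<Sum>u<n. \<Sum>v<n. f (usd_step opn (u, v))) / (real n)\<^sup>2"
proof -
  have "{..<n} \<times> {..<n} \<noteq> {}" using assms by auto
  then show ?thesis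
    by (simp add: usd_next_def integral_pmf_of_set sum.cartesian_product power2_eq_square)
qed

lemma usd_expected_gamma_tilde:
  assumes "n > 0" "valid_config n k opn"
  defines "c \<equiv> opinion_count n opn"
  shows "measure_pmf.expectation (usd_next n opn) (usd_gamma_tilde n k)
    = usd_gamma_tilde n k opn + (real (card {u\<in>{..<n}. opn u = None}) * adoption_gain {1..k} c
        + clash_gain {1..k} c) / (real n)\<^sup>2"
proof -
  have "(\<Sum>u<n. \<Sum>v<n. usd_gamma_tilde n k (usd_step opn (u, v)))
      = (\<Sum>u<n. \<Sum>v<n. collision_prob {1..k} (usd_count_update c (opn u) (opn v)) - collision_prob {1..k} c)
        + (real n)\<^sup>2 * collision_prob {1..k} c"
    by (simp add: usd_gamma_tilde_eq_collision_prob opinion_count_usd_step c_def sum_subtractf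
        power2_eq_square)
  then show ?thesis
    using assms(1) sum_usd_collision_prob_change[OF assms(2)]
    by (simp add: expectation_usd_next usd_gamma_tilde_eq_collision_prob c_def field_simps)
qed

lemma usd_expected_gamma_tilde_ge:
  assumes "n > 0" "valid_config n k opn"
    and "2 \<le> n * usd_beta n k opn" and "2 * usd_gamma n k opn \<le> (usd_beta n k opn)\<^sup>2"
  shows "measure_pmf.expectation (usd_next n opn) (usd_gamma_tilde n k)
    \<ge> usd_gamma_tilde n k opn + 1 / (4 * (real n)\<^sup>2)"
proof -
  define c where "c = opinion_count n opn"
  define B where "B = sum c {1..k}"
  define S where "S = (\<Sum>i\<in>{1..k}. (c i)\<^sup>2)"
  have B: "B \<ge> 2"
    using assms(1,3) by (simp add: usd_beta_eq B_def c_def)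
  have "2 * S / (real n)\<^sup>2 \<le> B\<^sup>2 / (real n)\<^sup>2"
    using assms(4) by (simp add: usd_beta_eq usd_gamma_eq B_def S_def c_def power_divide)
  then have SB: "2 * S \<le> B\<^sup>2"
    using assms(1) by (simp add: divide_le_cancel)
  have "S \<le> B\<^sup>2"
    using SB zero_le_power2[of B] by linarith
  then have "adoption_gain {1..k} c \<ge> 0"
    using B adoption_gain_eq[of "{1..k}" c] by (simp add: B_def S_def)
  moreover
  moreover have "clash_gain {1..k} c \<ge> 1 / 4"
    using B SB by (intro clash_gain_ge) (auto simp: B_def S_def c_def opinion_count_def)
  ultimately have "real (card {u\<in>{..<n}. opn u = None}) * adoption_gain {1..k} c
      + clash_gain {1..k} c \<ge> 1 / 4"
    by (simp add: add_increasing)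
  then have "(real (card {u\<in>{..<n}. opn u = None}) * adoption_gain {1..k} c
      + clash_gain {1..k} c) / (real n)\<^sup>2 \<ge> 1 / (4 * (real n)\<^sup>2)"
    using assms(1) by (simp add: divide_right_mono flip: divide_divide_eq_left)
  then show ?thesis
    using usd_expected_gamma_tilde[OF assms(1,2)] by (simp add: c_def)
qed

theorem mainTheorem15:
  "\<exists>(\<epsilon>0::real) (n0::nat). \<epsilon>0 > 0 \<and>
     (\<forall>n k opn. n \<ge> n0 \<longrightarrow> valid_config n k opn \<longrightarrow>
        usd_beta n k opn \<ge> 1/2 - \<epsilon>0 \<longrightarrow> usd_gamma n k opn \<le> \<epsilon>0 \<longrightarrow>
        measure_pmf.expectation (usd_next n opn) (usd_gamma_tilde n k)
          \<ge> usd_gamma_tilde n k opn + 1 / (12 * (real n)\<^sup>2))"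
proof (intro exI conjI allI impI)
  show "(1 / 100 :: real) > 0" by simp
  fix n k opn
  assume n: "5 \<le> n" and valid: "valid_config n k opn"
    and beta: "1/2 - 1/100 \<le> usd_beta n k opn" and gamma: "usd_gamma n k opn \<le> 1/100"
  have "2 \<le> n * usd_beta n k opn"
    using mult_mono[OF _ beta, of 5 n] n by simp
  moreover have "2 * usd_gamma n k opn \<le> (usd_beta n k opn)\<^sup>2"
    using gamma power_mono[OF beta, of 2] by (simp add: power2_eq_square)
  ultimately have "measure_pmf.expectation (usd_next n opn) (usd_gamma_tilde n k)
      \<ge> usd_gamma_tilde n k opn + 1 / (4 * (real n)\<^sup>2)"
    using n valid by (intro usd_expected_gamma_tilde_ge) auto
  moreover have "1 / (12 * (real n)\<^sup>2) \<le> 1 / (4 * (real n)\<^sup>2)"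
    using n by (intro divide_left_mono) auto
  ultimately show "measure_pmf.expectation (usd_next n opn) (usd_gamma_tilde n k)
      \<ge> usd_gamma_tilde n k opn + 1 / (12 * (real n)\<^sup>2)"
    by linarith
qed

end
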